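(* Let $n$, $q\ge2$ be integers and $a\in[1:n]$, $\nu=\lceil(n+1)/a\rceil$. Suppose $\mathbf{l}=(l_1,\dots,l_{q-1})$ and $\mathbf{l}'=(l_1',\dots,l_{q-1}')$ are adjacent elements of $V=\{\mathbf{m}\in[1:\nu]^{q-1}:\sum_im_i\le\frac na+q-1\}$. Then every $\mathbf{t}\in C_{\mathbf{l}}$ and $\mathbf{t}'\in C_{\mathbf{l}'}$ satisfy $d_{\mathrm c}(\mathbf{t},\mathbf{t}')\le\frac a2(2q+1)$.
   Context: $\mathcal{N}_{q,n}=\{\mathbf{t}\in\mathbb{Z}_{\ge0}^q:\sum t_i=n\}$; $C_{\mathbf{l}}=\{\mathbf{t}\in\mathcal{N}_{q,n}:(l_i-1)a\le t_i\le l_ia-1\ \forall i\in[1:q-1]\}$. Two distinct $\mathbf{l},\mathbf{l}'$ are adjacent if either all coordinates agree except one, where they differ by exactly $1$, or all coordinates agree except two indexed by $k,j$, where $l_k=l_k'+1$ and $l_j=l_j'-1$. $d_{\mathrm c}(\mathbf{t},\mathbf{t}')=\frac12\sum_{i=1}^q|t_i-t_i'|$. *)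

theory Defs
  imports Complex_Main
begin

text \<open>Vectors indexed by [1:q] (resp. [1:q-1]) are represented as functions
  nat \<Rightarrow> int; only the values on the index range matter.\<close>

definition simplex_pts :: "nat \<Rightarrow> nat \<Rightarrow> (nat \<Rightarrow> int) set" where
  "simplex_pts q n = {t. (\<forall>i\<in>{1..q}. t i \<ge> 0) \<and> (\<Sum>i=1..q. t i) = int n}"

definition cell :: "nat \<Rightarrow> nat \<Rightarrow> nat \<Rightarrow> (nat \<Rightarrow> int) \<Rightarrow> (nat \<Rightarrow> int) set" where
  "cell q n a l = {t \<in> simplex_pts q n.
      \<forall>i\<in>{1..q-1}. (l i - 1) * int a \<le> t i \<and> t i \<le> l i * int a - 1}"

definition adjacent :: "nat \<Rightarrow> (nat \<Rightarrow> int) \<Rightarrow> (nat \<Rightarrow> int) \<Rightarrow> bool" where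
  "adjacent q l l' \<longleftrightarrow>
     (\<exists>i\<in>{1..q-1}. l i \<noteq> l' i) \<and>
     ((\<exists>k\<in>{1..q-1}. \<bar>l k - l' k\<bar> = 1 \<and> (\<forall>i\<in>{1..q-1}. i \<noteq> k \<longrightarrow> l i = l' i)) \<or>
      (\<exists>k\<in>{1..q-1}. \<exists>j\<in>{1..q-1}. k \<noteq> j \<and> l k = l' k + 1 \<and> l j = l' j - 1 \<and>
          (\<forall>i\<in>{1..q-1}. i \<noteq> k \<and> i \<noteq> j \<longrightarrow> l i = l' i)))"

definition d_c :: "nat \<Rightarrow> (nat \<Rightarrow> int) \<Rightarrow> (nat \<Rightarrow> int) \<Rightarrow> real" where
  "d_c q t t' = (1/2) * (\<Sum>i=1..q. real_of_int \<bar>t i - t' i\<bar>)"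

definition nu :: "nat \<Rightarrow> nat \<Rightarrow> int" where
  "nu n a = \<lceil>(real n + 1) / real a\<rceil>"

definition Vset :: "nat \<Rightarrow> nat \<Rightarrow> nat \<Rightarrow> (nat \<Rightarrow> int) set" where
  "Vset q n a = {m. (\<forall>i\<in>{1..q-1}. 1 \<le> m i \<and> m i \<le> nu n a) \<and>
      real_of_int (\<Sum>i=1..q-1. m i) \<le> real n / real a + real q - 1}"

end

theory Submission
  imports Defs
begin

text \<open>On each of the first q-1 coordinates a cell is a window of length a, so
  t i - t' i differs from a (l i - l' i) by at most a - 1. The last coordinate is
  determined by the others, since both points have coordinate sum n. Adjacency
  means \<Sum>|l i - l' i| + |\<Sum>(l i - l' i)| \<le> 2, hence
  2 d_c(t,t') \<le> 2 (q-1)(a-1) + 2a \<le> 2qa.\<close>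

lemma cell_coordinate_offset:
  assumes "t \<in> cell q n a l" and "t' \<in> cell q n a l'" and "i \<in> {1..q-1}"
  shows "\<bar>(t i - t' i) - int a * (l i - l' i)\<bar> \<le> int a - 1"
proof -
  have "(l i - 1) * int a \<le> t i" "t i \<le> l i * int a - 1"
    "(l' i - 1) * int a \<le> t' i" "t' i \<le> l' i * int a - 1"
    using assms unfolding cell_def by auto
  then show ?thesis by (auto simp: algebra_simps)
qed

lemma sum_abs_diff_simplex_pts:
  assumes "t \<in> simplex_pts q n" and "t' \<in> simplex_pts q n" and "q \<ge> 1"
  shows "(\<Sum>i=1..q. \<bar>t i - t' i\<bar>) =
    (\<Sum>i=1..q-1. \<bar>t i - t' i\<bar>) + \<bar>\<Sum>i=1..q-1. t i - t' i\<bar>"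
proof -
  have split: "(\<Sum>i=1..q. f i) = (\<Sum>i=1..q-1. f i) + f q" for f :: "nat \<Rightarrow> int"
    using \<open>q \<ge> 1\<close> by (cases q) (auto simp: add.commute)
  have "(\<Sum>i=1..q. t i - t' i) = 0"
    using assms(1,2) by (simp add: simplex_pts_def sum_subtractf)
  then have "t q - t' q = - (\<Sum>i=1..q-1. t i - t' i)"
    using split[of "\<lambda>i. t i - t' i"] by simp
  then show ?thesis
    using split[of "\<lambda>i. \<bar>t i - t' i\<bar>"] by simp
qed

lemma adjacent_sum_abs_diff_le_2:
  assumes "adjacent q l l'"
  shows "(\<Sum>i=1..q-1. \<bar>l i - l' i\<bar>) + \<bar>\<Sum>i=1..q-1. l i - l' i\<bar> \<le> 2"
proof -
  define S where "S = {1..q-1}"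
  have sum_supp: "(\<Sum>i\<in>S. f i) = (\<Sum>i\<in>K. f i)" if "K \<subseteq> S" "\<forall>i\<in>S - K. f i = 0"
    for K and f :: "nat \<Rightarrow> int"
    using sum.mono_neutral_right[OF _ that] by (simp add: S_def)
  consider
      k where "k \<in> S" "\<bar>l k - l' k\<bar> = 1" "\<forall>i\<in>S. i \<noteq> k \<longrightarrow> l i = l' i"
    | k j where "k \<in> S" "j \<in> S" "k \<noteq> j" "l k = l' k + 1" "l j = l' j - 1"
        "\<forall>i\<in>S. i \<noteq> k \<and> i \<noteq> j \<longrightarrow> l i = l' i"
    using assms unfolding adjacent_def S_def by blast
  then show ?thesis
  proof cases
    case 1
    then have "(\<Sum>i\<in>S. f (l i - l' i)) = f (l k - l' k)" if "f 0 = 0" for f :: "int \<Rightarrow> int"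
      using sum_supp[of "{k}"] that by auto
    from this[of abs] this[of id] 1(2) show ?thesis unfolding S_def by simp
  next
    case 2
    then have "(\<Sum>i\<in>S. f (l i - l' i)) = f 1 + f (-1)" if "f 0 = 0" for f :: "int \<Rightarrow> int"
      using sum_supp[of "{k, j}"] that by auto
    from this[of abs] this[of id] show ?thesis unfolding S_def by simp
  qed
qed

text \<open>The sum of the |x i| plus |\<Sum> x i| is the l1-norm of x extended by the
  coordinate -\<Sum> x i; the bound is the triangle inequality for that norm.\<close>

lemma sum_abs_plus_abs_sum_le:
  fixes x d :: "'a \<Rightarrow> int"
  assumes "finite S" and "c \<ge> 0" and "\<And>i. i \<in> S \<Longrightarrow> \<bar>x i - c * d i\<bar> \<le> e"
  shows "(\<Sum>i\<in>S. \<bar>x i\<bar>) + \<bar>\<Sum>i\<in>S. x i\<bar> \<le>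
    2 * (int (card S) * e) + c * ((\<Sum>i\<in>S. \<bar>d i\<bar>) + \<bar>\<Sum>i\<in>S. d i\<bar>)"
proof -
  have sum_e: "(\<Sum>i\<in>S. \<bar>x i - c * d i\<bar>) \<le> int (card S) * e"
    using sum_mono[of S "\<lambda>i. \<bar>x i - c * d i\<bar>" "\<lambda>_. e"] assms(3) by simp
  have "(\<Sum>i\<in>S. \<bar>x i\<bar>) \<le> (\<Sum>i\<in>S. \<bar>x i - c * d i\<bar> + c * \<bar>d i\<bar>)"
  proof (rule sum_mono)
    fix i
    have "\<bar>x i\<bar> \<le> \<bar>x i - c * d i\<bar> + \<bar>c * d i\<bar>"
      using abs_triangle_ineq[of "x i - c * d i" "c * d i"] by simp
    then show "\<bar>x i\<bar> \<le> \<bar>x i - c * d i\<bar> + c * \<bar>d i\<bar>"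
      using \<open>c \<ge> 0\<close> by (simp add: abs_mult)
  qed
  also have "\<dots> = (\<Sum>i\<in>S. \<bar>x i - c * d i\<bar>) + c * (\<Sum>i\<in>S. \<bar>d i\<bar>)"
    by (simp add: sum.distrib sum_distrib_left)
  finally have abs_sum: "(\<Sum>i\<in>S. \<bar>x i\<bar>) \<le> int (card S) * e + c * (\<Sum>i\<in>S. \<bar>d i\<bar>)"
    using sum_e by linarith
  have "(\<Sum>i\<in>S. x i) = (\<Sum>i\<in>S. x i - c * d i) + c * (\<Sum>i\<in>S. d i)"
    by (simp add: sum_subtractf sum_distrib_left)
  then have "\<bar>\<Sum>i\<in>S. x i\<bar> \<le> \<bar>\<Sum>i\<in>S. x i - c * d i\<bar> + c * \<bar>\<Sum>i\<in>S. d i\<bar>"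
    using \<open>c \<ge> 0\<close> abs_triangle_ineq by (metis abs_mult abs_of_nonneg)
  also have "\<dots> \<le> int (card S) * e + c * \<bar>\<Sum>i\<in>S. d i\<bar>"
    using sum_abs[of "\<lambda>i. x i - c * d i" S] sum_e by linarith
  finally show ?thesis
    using abs_sum by (simp add: algebra_simps)
qed

theorem lemma13:
  fixes n q a :: nat and l l' t t' :: "nat \<Rightarrow> int"
  assumes "q \<ge> 2" and "1 \<le> a" and "a \<le> n"
    and "l \<in> Vset q n a" and "l' \<in> Vset q n a" and "adjacent q l l'"
    and "t \<in> cell q n a l" and "t' \<in> cell q n a l'"
  shows "d_c q t t' \<le> real a / 2 * (2 * real q + 1)"
proof -
  have simplex: "t \<in> simplex_pts q n" "t' \<in> simplex_pts q n"
    using assms(7,8) by (auto simp: cell_def)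
  have offset: "\<forall>i\<in>{1..q-1}. \<bar>(t i - t' i) - int a * (l i - l' i)\<bar> \<le> int a - 1"
    using cell_coordinate_offset[OF assms(7,8)] by blast
  have "(\<Sum>i=1..q. \<bar>t i - t' i\<bar>) =
      (\<Sum>i=1..q-1. \<bar>t i - t' i\<bar>) + \<bar>\<Sum>i=1..q-1. t i - t' i\<bar>"
    using sum_abs_diff_simplex_pts[OF simplex] \<open>q \<ge> 2\<close> by simp
  also have "\<dots> \<le> 2 * (int (card {1..q-1}) * (int a - 1)) +
      int a * ((\<Sum>i=1..q-1. \<bar>l i - l' i\<bar>) + \<bar>\<Sum>i=1..q-1. l i - l' i\<bar>)"
    using offset by (intro sum_abs_plus_abs_sum_le) auto
  also have "\<dots> \<le> 2 * (int (q - 1) * (int a - 1)) + int a * 2"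
    using adjacent_sum_abs_diff_le_2[OF assms(6)] by (simp add: mult_left_mono)
  also have "\<dots> \<le> int a * (2 * int q + 1)"
    using assms(1,2) by (simp add: of_nat_diff algebra_simps)
  finally have "real_of_int (\<Sum>i=1..q. \<bar>t i - t' i\<bar>) \<le> real_of_int (int a * (2 * int q + 1))"
    by (simp only: of_int_le_iff)
  then show ?thesis
    unfolding d_c_def by simp
qed

end
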